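(* Let $\mu$ be a $(C,\gamma)$-absolutely decaying measure on $\mathbb{R}$ with associated constant $\rho_0$, let $K=\operatorname{supp}\mu$, and let $0<\alpha\le\frac14\left(\frac{1}{3C}\right)^{1/\gamma}$. Then for every $0<\rho<\rho_0$, every $x_1\in K$ and every finite collection of points $y_1,\dots,y_N\in\mathbb{R}$, there exists $x_1'\in K$ with $B(x_1',\alpha\rho)\subset B(x_1,\rho)$ and such that for at least half of the indices $i\in\{1,\dots,N\}$ one has $d(B(x_1',\alpha\rho),y_i)>\alpha\rho$.
   Context: $B(x,\rho)$ denotes the closed interval $[x-\rho,x+\rho]$, and $d(A,y)=\inf_{a\in A}|a-y|$. A locally finite Borel measure $\mu$ on $\mathbb{R}$ is $(C,\gamma)$-absolutely decaying with constant $\rho_0>0$ if for all $0<\rho\le\rho_0$, $x\in\operatorname{supp}\mu$, $y\in\mathbb{R}$, $\varepsilon>0$: $\mu(B(x,\rho)\cap B(y,\varepsilon\rho))<C\varepsilon^\gamma\mu(B(x,\rho))$. *)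

theory Defs
  imports "HOL-Analysis.Analysis"
begin

definition locally_finite_borel :: "real measure \<Rightarrow> bool" where
  "locally_finite_borel M \<longleftrightarrow> sets M = sets borel \<and>
     (\<forall>x. \<exists>e>0. emeasure M (ball x e) < \<infinity>)"

definition msupp :: "real measure \<Rightarrow> real set" where
  "msupp M = {x. \<forall>e>0. emeasure M (ball x e) > 0}"

text \<open>(C,gamma)-absolutely decaying with constant rho0; B(x,rho) is the closed ball cball x rho.\<close>
definition abs_decaying :: "real measure \<Rightarrow> real \<Rightarrow> real \<Rightarrow> real \<Rightarrow> bool" where
  "abs_decaying M C \<gamma> \<rho>0 \<longleftrightarrow> locally_finite_borel M \<and> C > 0 \<and> \<gamma> > 0 \<and> \<rho>0 > 0 \<and>
     (\<forall>\<rho> x y \<epsilon>. 0 < \<rho> \<and> \<rho> \<le> \<rho>0 \<and> x \<in> msupp M \<and> \<epsilon> > 0 \<longrightarrow>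
        emeasure M (cball x \<rho> \<inter> cball y (\<epsilon> * \<rho>))
          < ennreal (C * \<epsilon> powr \<gamma>) * emeasure M (cball x \<rho>))"

end

theory Submission imports Defs begin

text \<open>
  A point of the support at distance between \<open>4\<alpha>\<rho>\<close> and \<open>\<rho> - \<alpha>\<rho>\<close> from \<open>x\<^sub>1\<close> must exist:
  otherwise the support inside \<open>B(x\<^sub>1,\<rho>)\<close> would be covered by \<open>B(x\<^sub>1,4\<alpha>\<rho>)\<close> and two balls of
  radius \<open>\<alpha>\<rho>/2\<close> at the ends of the interval, and absolute decay makes these three pieces carry
  less than the whole mass.  The balls of radius \<open>\<alpha>\<rho>\<close> around \<open>x\<^sub>1\<close> and this second point are
  more than \<open>4\<alpha>\<rho>\<close> apart, so no \<open>y\<^sub>i\<close> is within \<open>\<alpha>\<rho>\<close> of both; one of them is therefore far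
  from at least half of the \<open>y\<^sub>i\<close>.
\<close>

instance ennreal :: strict_ordered_comm_monoid_add ..

lemma msupp_compl_null_sets:
  assumes "sets M = sets borel"
  shows "- msupp M \<in> null_sets M"
proof -
  define F where "F = {ball z e | z e. emeasure M (ball z e) = 0}"
  have "\<Union>F = - msupp M"
  proof
    show "\<Union>F \<subseteq> - msupp M"
    proof
      fix w assume "w \<in> \<Union>F"
      then obtain z e where null: "emeasure M (ball z e) = 0" and w: "w \<in> ball z e"
        unfolding F_def by blast
      have "ball w (e - dist z w) \<subseteq> ball z e"
        using w by (simp add: ball_subset_ball_iff dist_commute)
      then have "emeasure M (ball w (e - dist z w)) = 0"
        using emeasure_mono[of _ "ball z e" M] null by (simp add: assms)
      moreover have "0 < e - dist z w"
        using w by simp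
      ultimately show "w \<in> - msupp M"
        unfolding msupp_def by (auto intro!: exI[of _ "e - dist z w"])
    qed
    show "- msupp M \<subseteq> \<Union>F"
    proof
      fix w assume "w \<in> - msupp M"
      then obtain e where "e > 0" "emeasure M (ball w e) = 0"
        unfolding msupp_def by auto
      then show "w \<in> \<Union>F"
        unfolding F_def using centre_in_ball by blast
    qed
  qed
  moreover obtain F' where "F' \<subseteq> F" "countable F'" "\<Union>F' = \<Union>F"
    using Lindelof[of F] unfolding F_def by blast
  moreover have "(\<Union>S\<in>F'. S) \<in> null_sets M"
  proof (rule null_sets_UN'[OF \<open>countable F'\<close>])
    fix S assume "S \<in> F'"
    then show "S \<in> null_sets M"
      using \<open>F' \<subseteq> F\<close> by (auto simp: F_def null_sets_def assms)
  qed
  ultimately show ?thesis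
    by simp
qed

lemma abs_decaying_cover_weight:
  fixes c \<epsilon> :: "'i \<Rightarrow> real"
  assumes dec: "abs_decaying M C \<gamma> \<rho>0"
    and "0 < \<rho>" "\<rho> \<le> \<rho>0" "x \<in> msupp M"
    and "finite J" and \<epsilon>_pos: "\<And>j. j \<in> J \<Longrightarrow> 0 < \<epsilon> j"
    and cover: "cball x \<rho> \<inter> msupp M \<subseteq> (\<Union>j\<in>J. cball (c j) (\<epsilon> j * \<rho>))"
  shows "1 < (\<Sum>j\<in>J. C * \<epsilon> j powr \<gamma>)"
proof (rule ccontr)
  assume "\<not> 1 < (\<Sum>j\<in>J. C * \<epsilon> j powr \<gamma>)"
  then have weight_le: "ennreal (\<Sum>j\<in>J. C * \<epsilon> j powr \<gamma>) \<le> 1"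
    by simp
  have sets_M: "sets M = sets borel" and "0 < C"
    using dec unfolding abs_decaying_def locally_finite_borel_def by auto
  define B where "B = cball x \<rho>"
  have "x \<in> cball x \<rho> \<inter> msupp M"
    using \<open>x \<in> msupp M\<close> \<open>0 < \<rho>\<close> by simp
  then have "J \<noteq> {}"
    using cover by blast
  have "emeasure M B = emeasure M (B - - msupp M)"
    by (rule emeasure_Diff_null_set[OF msupp_compl_null_sets[OF sets_M], symmetric])
       (simp add: sets_M B_def)
  also have "\<dots> \<le> emeasure M (\<Union>j\<in>J. B \<inter> cball (c j) (\<epsilon> j * \<rho>))"
    using cover \<open>finite J\<close>
    by (intro emeasure_mono) (auto simp: B_def sets_M borel_closed closed_Int closed_UN)
  also have "\<dots> \<le> (\<Sum>j\<in>J. emeasure M (B \<inter> cball (c j) (\<epsilon> j * \<rho>)))"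
    using \<open>finite J\<close> by (intro emeasure_subadditive_finite) (auto simp: sets_M B_def)
  also have "\<dots> < (\<Sum>j\<in>J. ennreal (C * \<epsilon> j powr \<gamma>) * emeasure M B)"
  proof (rule sum_strict_mono[OF \<open>finite J\<close> \<open>J \<noteq> {}\<close>])
    fix j assume "j \<in> J"
    then show "emeasure M (B \<inter> cball (c j) (\<epsilon> j * \<rho>)) < ennreal (C * \<epsilon> j powr \<gamma>) * emeasure M B"
      using dec assms(2-4) \<epsilon>_pos unfolding abs_decaying_def B_def by blast
  qed
  also have "\<dots> = ennreal (\<Sum>j\<in>J. C * \<epsilon> j powr \<gamma>) * emeasure M B"
    unfolding sum_distrib_right[symmetric] using \<open>0 < C\<close> by simp
  also have "\<dots> \<le> emeasure M B"
    using weight_le mult_right_mono[of _ 1 "emeasure M B"] by simp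
  finally show False
    by simp
qed

lemma annulus_subset_end_cballs:
  fixes x z r \<rho> :: real
  assumes "dist x z \<le> \<rho>" "\<rho> - r < dist x z"
  shows "z \<in> cball (x - \<rho> + r/2) (r/2) \<union> cball (x + \<rho> - r/2) (r/2)"
proof (cases "x \<le> z")
  case True
  then have "dist (x + \<rho> - r/2) z \<le> r/2"
    using assms unfolding dist_real_def abs_le_iff by linarith
  then show ?thesis
    by simp
next
  case False
  then have "dist (x - \<rho> + r/2) z \<le> r/2"
    using assms unfolding dist_real_def abs_le_iff by linarith
  then show ?thesis
    by simp
qed

lemma abs_decaying_distant_support_point:
  assumes dec: "abs_decaying M C \<gamma> \<rho>0"
    and "0 < \<alpha>" and small: "C * (4 * \<alpha>) powr \<gamma> \<le> 1/3"
    and "0 < \<rho>" "\<rho> \<le> \<rho>0" and "x \<in> msupp M"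
  obtains x' where "x' \<in> msupp M" "4 * (\<alpha> * \<rho>) < dist x x'" "dist x x' \<le> \<rho> - \<alpha> * \<rho>"
proof (rule ccontr)
  assume no_point: "\<not> thesis"
  define r where "r = \<alpha> * \<rho>"
  define c :: "nat \<Rightarrow> real"
    where "c j = (if j = 0 then x - \<rho> + r/2 else if j = 1 then x + \<rho> - r/2 else x)" for j
  define \<epsilon> :: "nat \<Rightarrow> real" where "\<epsilon> j = (if j = 2 then 4 * \<alpha> else \<alpha> / 2)" for j
  have "cball x \<rho> \<inter> msupp M \<subseteq> (\<Union>j\<in>{0,1,2}. cball (c j) (\<epsilon> j * \<rho>))"
  proof
    fix z assume z: "z \<in> cball x \<rho> \<inter> msupp M"
    show "z \<in> (\<Union>j\<in>{0,1,2}. cball (c j) (\<epsilon> j * \<rho>))"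
    proof (cases "dist x z \<le> \<rho> - r")
      case True
      then have "dist x z \<le> 4 * r"
        using no_point that z unfolding r_def by force
      then show ?thesis
        by (auto simp: c_def \<epsilon>_def r_def)
    next
      case False
      then show ?thesis
        using annulus_subset_end_cballs[of x z \<rho> r] z
        by (auto simp: c_def \<epsilon>_def r_def)
    qed
  qed
  then have "1 < (\<Sum>j\<in>{0,1,2}. C * \<epsilon> j powr \<gamma>)"
    using assms \<open>0 < \<alpha>\<close> by (intro abs_decaying_cover_weight[OF dec]) (auto simp: \<epsilon>_def)
  also have "\<dots> = 2 * (C * (\<alpha> / 2) powr \<gamma>) + C * (4 * \<alpha>) powr \<gamma>"
    by (simp add: \<epsilon>_def)
  also have "\<dots> \<le> 3 * (C * (4 * \<alpha>) powr \<gamma>)"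
    using dec \<open>0 < \<alpha>\<close> unfolding abs_decaying_def
    by (auto intro!: mult_left_mono powr_mono2)
  finally show False
    using small by simp
qed

lemma powr_le_of_le_powr_inverse:
  fixes a b \<gamma> :: real
  assumes "0 < \<gamma>" "0 \<le> a" "0 \<le> b" "a \<le> b powr (1 / \<gamma>)"
  shows "a powr \<gamma> \<le> b"
proof -
  have "a powr \<gamma> \<le> (b powr (1 / \<gamma>)) powr \<gamma>"
    using assms by (intro powr_mono2) auto
  then show ?thesis
    using assms by (simp add: powr_powr)
qed

lemma dist_le_of_infdist_cball_le:
  fixes y x r :: real
  assumes "0 \<le> r" "infdist y (cball x r) \<le> r"
  shows "dist y x \<le> 2 * r"
proof -
  obtain z where z: "z \<in> cball x r" "infdist y (cball x r) = dist y z"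
    using infdist_attains_inf[of "cball x r" y] assms(1) by auto
  then have "dist x z \<le> r"
    by simp
  then show ?thesis
    using assms(2) z(2) dist_triangle[of y x z] dist_commute[of z x] by linarith
qed

lemma infdist_cball_gt_of_far_centres:
  fixes y x x' r :: real
  assumes "0 \<le> r" "4 * r < dist x x'"
  shows "r < infdist y (cball x r) \<or> r < infdist y (cball x' r)"
proof (rule ccontr)
  assume "\<not> ?thesis"
  then have "dist y x \<le> 2 * r" "dist y x' \<le> 2 * r"
    using assms(1) dist_le_of_infdist_cball_le[of r y] by (auto simp: not_less)
  then show False
    using assms(2) dist_triangle3[of x x' y] by linarith
qed

lemma card_subset_Un_le_twice:
  assumes "finite A" "A \<subseteq> G \<union> H" "G \<subseteq> A" "H \<subseteq> A"
  shows "card A \<le> 2 * card G \<or> card A \<le> 2 * card H"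
proof -
  have "card A \<le> card (G \<union> H)"
    using assms by (intro card_mono) (auto intro: finite_subset)
  also have "\<dots> \<le> card G + card H"
    by (rule card_Un_le)
  finally show ?thesis
    by linarith
qed

theorem lemma3p2:
  fixes M :: "real measure" and C \<gamma> \<rho>0 \<alpha> \<rho> x1 :: real
    and N :: nat and y :: "nat \<Rightarrow> real"
  assumes "abs_decaying M C \<gamma> \<rho>0"
    and "0 < \<alpha>" and "\<alpha> \<le> (1/4) * (1 / (3 * C)) powr (1 / \<gamma>)"
    and "0 < \<rho>" and "\<rho> < \<rho>0"
    and "x1 \<in> msupp M"
  shows "\<exists>x1' \<in> msupp M. cball x1' (\<alpha> * \<rho>) \<subseteq> cball x1 \<rho> \<and>
           2 * card {i \<in> {1..N}. infdist (y i) (cball x1' (\<alpha> * \<rho>)) > \<alpha> * \<rho>} \<ge> N"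
proof -
  have "0 < C" "0 < \<gamma>"
    using assms(1) unfolding abs_decaying_def by auto
  then have "(4 * \<alpha>) powr \<gamma> \<le> 1 / (3 * C)"
    using assms(2,3) by (intro powr_le_of_le_powr_inverse) auto
  then have "C * (4 * \<alpha>) powr \<gamma> \<le> 1/3"
    using \<open>0 < C\<close> by (simp add: field_simps)
  then obtain x2 where x2: "x2 \<in> msupp M" "4 * (\<alpha> * \<rho>) < dist x1 x2" "dist x1 x2 \<le> \<rho> - \<alpha> * \<rho>"
    using abs_decaying_distant_support_point[OF assms(1,2) _ assms(4) _ assms(6)] assms(5) by force
  define G where "G x = {i \<in> {1..N}. infdist (y i) (cball x (\<alpha> * \<rho>)) > \<alpha> * \<rho>}" for x
  have "{1..N} \<subseteq> G x1 \<union> G x2"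
    using infdist_cball_gt_of_far_centres[of "\<alpha> * \<rho>" x1 x2] x2 assms(2,4)
    by (auto simp: G_def)
  moreover have "G x \<subseteq> {1..N}" for x
    by (auto simp: G_def)
  ultimately have "N \<le> 2 * card (G x1) \<or> N \<le> 2 * card (G x2)"
    using card_subset_Un_le_twice[of "{1..N}"] by simp
  moreover have "cball x1 (\<alpha> * \<rho>) \<subseteq> cball x1 \<rho>"
    using x2 zero_le_dist[of x1 x2] by (intro subset_cball) linarith
  moreover have "cball x2 (\<alpha> * \<rho>) \<subseteq> cball x1 \<rho>"
    using x2 by (simp add: cball_subset_cball_iff dist_commute)
  ultimately show ?thesis
    using x2(1) assms(6) unfolding G_def by blast
qed

end
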